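(* Let $G$ be an Abelian group, $B=\{b_0,\dots,b_{q-1}\}\subseteq G$ a $B_h$ set of cardinality $q$, $b\in G$, and $n\ge1$. Then the code $$\mathcal C_n^{(G,B,b)}=\Big\{\mathbf x\in\triangle_n^{q-1}:\sum_{i=0}^{q-1}x_ib_i=b\Big\}$$ can correct $h$ deletions; in particular, if it has at least two elements then $d_1(\mathcal C_n^{(G,B,b)})>h$.
   Context: $\triangle_n^{q-1}=\{\mathbf x\in\mathbb Z^q:x_i\ge0,\sum_{i=0}^{q-1}x_i=n\}$, identified with multisets of cardinality $n$ over $[q]=\{0,\dots,q-1\}$ ($x_i$ = multiplicity of symbol $i$). $d_1(\mathbf x,\mathbf y)=\frac12\sum_i|x_i-y_i|$, $d_1(\mathcal C)$ its minimum over distinct codewords. A deletion removes one element of the multiset; a code can correct $h$ deletions if no two distinct codewords yield the same output after arbitrary patterns of at most $h$ deletions. $x_ib_i$ is the $x_i$-fold sum of $b_i$ in $G$. A set $\{b_0,\dots,b_{q-1}\}$ in an Abelian group is a $B_h$ set if the sums $b_{i_1}+\dots+b_{i_h}$, $0\le i_1\le\dots\le i_h\le q-1$, are pairwise different. *)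

theory Defs
  imports Complex_Main "HOL-Library.Multiset"
begin

text \<open>Words of the multiset channel: multisets over the alphabet [q] = {0,...,q-1};
  the vector x in the simplex is given by x_i = count M i.\<close>

definition simplex :: "nat \<Rightarrow> nat \<Rightarrow> nat multiset set" where
  "simplex q n = {M. set_mset M \<subseteq> {..<q} \<and> size M = n}"

definition nsum :: "nat \<Rightarrow> 'a::ab_group_add \<Rightarrow> 'a" where
  "nsum k g = (\<Sum>_\<in>{..<k}. g)"

text \<open>B_h set: sums of h (not necessarily distinct) elements b_{i_1}+...+b_{i_h},
  i_1 \<le> ... \<le> i_h, i.e. indexed by multisets of size h over [q], are pairwise different.\<close>
definition Bh_set :: "nat \<Rightarrow> nat \<Rightarrow> (nat \<Rightarrow> 'a::ab_group_add) \<Rightarrow> bool" where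
  "Bh_set h q b \<longleftrightarrow>
     (\<forall>I J. set_mset I \<subseteq> {..<q} \<and> size I = h \<and> set_mset J \<subseteq> {..<q} \<and> size J = h \<and> I \<noteq> J
        \<longrightarrow> sum_mset (image_mset b I) \<noteq> sum_mset (image_mset b J))"

definition code :: "nat \<Rightarrow> nat \<Rightarrow> (nat \<Rightarrow> 'a::ab_group_add) \<Rightarrow> 'a \<Rightarrow> nat multiset set" where
  "code q n b c = {M \<in> simplex q n. (\<Sum>i<q. nsum (count M i) (b i)) = c}"

definition del_outputs :: "nat \<Rightarrow> 'b multiset \<Rightarrow> 'b multiset set" where
  "del_outputs h M = {N. N \<subseteq># M \<and> size M - size N \<le> h}"

definition corrects_deletions :: "nat \<Rightarrow> 'b multiset set \<Rightarrow> bool" where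
  "corrects_deletions h C \<longleftrightarrow>
     (\<forall>x\<in>C. \<forall>y\<in>C. x \<noteq> y \<longrightarrow> del_outputs h x \<inter> del_outputs h y = {})"

definition d1 :: "nat \<Rightarrow> nat multiset \<Rightarrow> nat multiset \<Rightarrow> real" where
  "d1 q x y = (1/2) * (\<Sum>i<q. \<bar>real (count x i) - real (count y i)\<bar>)"

definition d1_code :: "nat \<Rightarrow> nat multiset set \<Rightarrow> real" where
  "d1_code q C = Min {d1 q x y | x y. x \<in> C \<and> y \<in> C \<and> x \<noteq> y}"

end

theory Submission
  imports Defs
begin

text \<open>Two codewords x \<noteq> y of equal size share an output after at most h deletions iff
  their differences x - y and y - x, which have the same size, have size at most h. Both
  differences have the same b-sum, since x and y do and they share x \<inter># y. Padding both with
  copies of one symbol up to size h yields two distinct multisets of size h with equal b-sums,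
  contradicting the B_h property. Finally d_1(x, y) is exactly |x - y|.\<close>

lemma nsum_add: "nsum (m + k) g = nsum m g + nsum k g"
  by (induction k) (simp_all add: nsum_def lessThan_Suc add.assoc add.commute add.left_commute)

lemma sum_nsum_count_eq_sum_mset:
  assumes "finite A" and "set_mset M \<subseteq> A"
  shows "(\<Sum>i\<in>A. nsum (count M i) (b i)) = (\<Sum>i\<in>#M. b i)"
  using assms(2)
proof (induction M)
  case empty
  then show ?case by (simp add: nsum_def)
next
  case (add a M)
  have "(\<Sum>i\<in>A. nsum (count (add_mset a M) i) (b i))
      = (\<Sum>i\<in>A. nsum (count M i) (b i)) + (\<Sum>i\<in>A. if i = a then b i else 0)"
    unfolding sum.distrib[symmetric]
    by (rule sum.cong) (auto simp: nsum_add[symmetric] nsum_def)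
  also have "(\<Sum>i\<in>A. if i = a then b i else 0) = b a"
    using add.prems assms(1) by simp
  finally show ?case using add by (simp add: add.commute)
qed

lemma size_eq_sum_count:
  assumes "finite A" and "set_mset M \<subseteq> A"
  shows "size M = (\<Sum>i\<in>A. count M i)"
  unfolding size_multiset_overloaded_eq
  using assms by (intro sum.mono_neutral_left) (auto simp: count_eq_zero_iff)

lemma size_Diff_eq_of_size_eq:
  fixes M N :: "'a multiset"
  assumes "size M = size N"
  shows "size (M - N) = size (N - M)"
  using assms size_Diff_submset[of "M \<inter># N" M] size_Diff_submset[of "M \<inter># N" N]
  by (simp add: subset_mset.inf_commute)

lemma del_outputs_disjoint_iff:
  assumes "size x = size y"
  shows "del_outputs h x \<inter> del_outputs h y = {} \<longleftrightarrow> h < size (x - y)"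
proof
  assume disjoint: "del_outputs h x \<inter> del_outputs h y = {}"
  show "h < size (x - y)"
  proof (rule ccontr)
    assume "\<not> h < size (x - y)"
    moreover have "size (x - y) = size x - size (x \<inter># y)" "size (x - y) = size y - size (x \<inter># y)"
      using size_Diff_submset[of "x \<inter># y" x] size_Diff_submset[of "x \<inter># y" y]
        size_Diff_eq_of_size_eq[OF assms] by (simp_all add: subset_mset.inf_commute)
    ultimately have "x \<inter># y \<in> del_outputs h x \<inter> del_outputs h y"
      unfolding del_outputs_def by auto
    with disjoint show False by blast
  qed
next
  assume gt: "h < size (x - y)"
  show "del_outputs h x \<inter> del_outputs h y = {}"
  proof (rule ccontr)
    assume "del_outputs h x \<inter> del_outputs h y \<noteq> {}"
    then obtain N where common: "N \<subseteq># x \<inter># y" and del: "size x - size N \<le> h"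
      unfolding del_outputs_def by auto
    from size_mset_mono[OF common] have "size N \<le> size (x \<inter># y)" .
    moreover have "size (x - y) = size x - size (x \<inter># y)"
      using size_Diff_submset[of "x \<inter># y" x] by simp
    ultimately show False using gt del by linarith
  qed
qed

lemma corrects_deletions_iff_size_Diff:
  assumes "\<And>x. x \<in> C \<Longrightarrow> size x = n"
  shows "corrects_deletions h C \<longleftrightarrow> (\<forall>x\<in>C. \<forall>y\<in>C. x \<noteq> y \<longrightarrow> h < size (x - y))"
  unfolding corrects_deletions_def using assms by (simp add: del_outputs_disjoint_iff)

lemma Bh_set_sum_mset_inj:
  assumes "Bh_set h q b"
    and "set_mset X \<subseteq> {..<q}" and "set_mset Y \<subseteq> {..<q}"
    and "size X = size Y" and "size X \<le> h"
    and "(\<Sum>i\<in>#X. b i) = (\<Sum>i\<in>#Y. b i)"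
  shows "X = Y"
proof (rule ccontr)
  assume "X \<noteq> Y"
  with assms(4) obtain a where "a \<in># X" by (metis multiset_nonemptyE size_eq_0_iff_empty)
  define P where "P = replicate_mset (h - size X) a"
  have "set_mset (X + P) \<subseteq> {..<q}" "set_mset (Y + P) \<subseteq> {..<q}"
    using assms(2,3) \<open>a \<in># X\<close> by (auto simp: P_def)
  moreover have "size (X + P) = h" "size (Y + P) = h"
    using assms(4,5) by (simp_all add: P_def)
  moreover have "X + P \<noteq> Y + P" using \<open>X \<noteq> Y\<close> by simp
  ultimately have "(\<Sum>i\<in>#X + P. b i) \<noteq> (\<Sum>i\<in>#Y + P. b i)"
    using assms(1) unfolding Bh_set_def by blast
  with assms(6) show False by simp
qed

lemma code_memD:
  assumes "x \<in> code q n b c"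
  shows "set_mset x \<subseteq> {..<q}" and "size x = n" and "(\<Sum>i\<in>#x. b i) = c"
  using assms sum_nsum_count_eq_sum_mset[of "{..<q}" x b]
  by (auto simp: code_def simplex_def)

lemma code_size_Diff_gt:
  assumes "Bh_set h q b" and "x \<in> code q n b c" and "y \<in> code q n b c" and "x \<noteq> y"
  shows "h < size (x - y)"
proof (rule ccontr)
  assume "\<not> h < size (x - y)"
  have x_split: "x = (x \<inter># y) + (x - y)" and y_split: "y = (x \<inter># y) + (y - x)"
    by (auto simp: multiset_eq_iff)
  have "(\<Sum>i\<in>#x. b i) = (\<Sum>i\<in>#y. b i)"
    using code_memD(3)[OF assms(2)] code_memD(3)[OF assms(3)] by simp
  then have "(\<Sum>i\<in>#x - y. b i) = (\<Sum>i\<in>#y - x. b i)"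
    by (subst (asm) x_split, subst (asm) y_split) simp
  moreover have "size (x - y) = size (y - x)"
    using size_Diff_eq_of_size_eq code_memD(2) assms(2,3) by metis
  moreover have "set_mset (x - y) \<subseteq> {..<q}" "set_mset (y - x) \<subseteq> {..<q}"
    using code_memD(1)[OF assms(2)] code_memD(1)[OF assms(3)] by (auto dest: in_diffD)
  ultimately have "x - y = y - x"
    using Bh_set_sum_mset_inj[OF assms(1)] \<open>\<not> h < size (x - y)\<close> by simp
  then have "x = y" using x_split y_split by metis
  with assms(4) show False ..
qed

lemma d1_eq_size_Diff:
  assumes "set_mset x \<subseteq> {..<q}" and "set_mset y \<subseteq> {..<q}"
  shows "d1 q x y = (real (size (x - y)) + real (size (y - x))) / 2"
proof -
  have "(\<Sum>i<q. \<bar>real (count x i) - real (count y i)\<bar>)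
      = (\<Sum>i<q. real (count (x - y) i) + real (count (y - x) i))"
    by (rule sum.cong) auto
  also have "\<dots> = real (\<Sum>i<q. count (x - y) i) + real (\<Sum>i<q. count (y - x) i)"
    by (simp add: sum.distrib)
  also have "\<dots> = real (size (x - y)) + real (size (y - x))"
    using assms by (subst (1 2) size_eq_sum_count[of "{..<q}"]) (auto dest: in_diffD)
  finally show ?thesis by (simp add: d1_def)
qed

lemma d1_code_gt:
  assumes "2 \<le> card C" and "\<And>x y. x \<in> C \<Longrightarrow> y \<in> C \<Longrightarrow> x \<noteq> y \<Longrightarrow> t < d1 q x y"
  shows "t < d1_code q C"
proof -
  have "finite C" using assms(1) card.infinite by fastforce
  moreover have "{d1 q x y | x y. x \<in> C \<and> y \<in> C \<and> x \<noteq> y} \<subseteq> case_prod (d1 q) ` (C \<times> C)"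
    by auto
  ultimately have "finite {d1 q x y | x y. x \<in> C \<and> y \<in> C \<and> x \<noteq> y}"
    using finite_subset by blast
  moreover obtain x y where "x \<in> C" "y \<in> C" "x \<noteq> y"
    using assms(1) \<open>finite C\<close> card_le_Suc0_iff_eq[of C] by fastforce
  ultimately show ?thesis
    unfolding d1_code_def using assms(2) by (subst Min_gr_iff) blast+
qed

theorem mainTheorem13:
  fixes b :: "nat \<Rightarrow> 'a::ab_group_add" and c :: 'a and q h n :: nat
  assumes "inj_on b {..<q}"
    and "Bh_set h q b"
    and "n \<ge> 1"
  shows "corrects_deletions h (code q n b c)
         \<and> (card (code q n b c) \<ge> 2 \<longrightarrow> d1_code q (code q n b c) > real h)"
proof (intro conjI impI)
  have "corrects_deletions h (code q n b c) \<longleftrightarrow>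
      (\<forall>x\<in>code q n b c. \<forall>y\<in>code q n b c. x \<noteq> y \<longrightarrow> h < size (x - y))"
    by (rule corrects_deletions_iff_size_Diff) (rule code_memD(2))
  then show "corrects_deletions h (code q n b c)"
    using code_size_Diff_gt[OF assms(2)] by simp
  assume "card (code q n b c) \<ge> 2"
  moreover have "real h < d1 q x y" if "x \<in> code q n b c" "y \<in> code q n b c" "x \<noteq> y" for x y
  proof -
    have "size (x - y) = size (y - x)"
      using code_memD(2)[OF that(1)] code_memD(2)[OF that(2)] by (simp add: size_Diff_eq_of_size_eq)
    then have "d1 q x y = real (size (x - y))"
      using d1_eq_size_Diff[OF code_memD(1)[OF that(1)] code_memD(1)[OF that(2)]] by simp
    with code_size_Diff_gt[OF assms(2) that] show ?thesis by simp
  qed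
  ultimately show "d1_code q (code q n b c) > real h"
    by (rule d1_code_gt)
qed

end
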